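(* Let $1 \le d \le n$ and let $c_0, C_0 > 0$. There is a constant $C$ depending only on $n$, $c_0$, $C_0$ such that the following holds. Let $Z \subseteq \mathbb{R}^n$ be a hypersurface and $D > 0$, and suppose that for all unit vectors $e \in \mathbb{R}^n$ we have $c_0 \leq \operatorname{surf}_e(Z) \leq C_0 D$. Then for all unit vectors $v_1, \dots, v_d \in \mathbb{R}^n$, $$\left(v_1 \wedge \cdots \wedge v_d\right)^{1/n} \operatorname{vis}(Z) \leq C D^{(n-d)/n}\left(\operatorname{surf}_{v_1}(Z)\cdots \operatorname{surf}_{v_d}(Z)\right)^{1/n}.$$
   Context: A hypersurface $Z \subseteq \mathbb{R}^n$ here is a set carrying a unit normal $n(x)$ defined for $\mathcal{H}_{n-1}$-almost every $x \in Z$ (e.g. the zero set of a nonzero polynomial intersected with a cube). For a unit vector $e$, the directional surface area is $\operatorname{surf}_e(Z) = \int_Z |e \cdot n(x)|\, d\mathcal{H}_{n-1}(x)$. With $\mathbb{B}$ the closed unit ball of $\mathbb{R}^n$ and $\widehat{u} = u/|u|$, define $K(Z) = \{u \in \mathbb{B} : \operatorname{surf}_{\widehat{u}}(Z) \leq 1/|u|\}$ (with $u=0$ included); this is a symmetric convex set. The visibility is $\operatorname{vis}(Z) = (\operatorname{vol} K(Z))^{-1/n}$. For vectors $v_1,\dots,v_d$, $v_1 \wedge \cdots \wedge v_d$ is the unsigned $d$-dimensional volume of the parallelepiped they span. *)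

theory Defs
  imports "HOL-Analysis.Analysis"
begin

text \<open>Normalisation constant omega_s = pi^(s/2) / Gamma(s/2+1) (volume of the unit s-ball).\<close>
definition haus_const :: "real \<Rightarrow> real" where
  "haus_const s = pi powr (s / 2) / Gamma (s / 2 + 1)"

definition haus_cost :: "real \<Rightarrow> 'a::metric_space set \<Rightarrow> real" where
  "haus_cost s S = (if S = {} then 0 else if s = 0 then 1
                    else haus_const s * (diameter S / 2) powr s)"

definition hausdorff_pre :: "real \<Rightarrow> real \<Rightarrow> 'a::metric_space set \<Rightarrow> ennreal" where
  "hausdorff_pre s \<delta> A =
     (INF C \<in> {C :: nat \<Rightarrow> 'a set. A \<subseteq> (\<Union>i. C i) \<and> (\<forall>i. bounded (C i) \<and> diameter (C i) \<le> \<delta>)}.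
        (\<Sum>i. ennreal (haus_cost s (C i))))"

definition hausdorff_outer :: "real \<Rightarrow> 'a::metric_space set \<Rightarrow> ennreal" where
  "hausdorff_outer s A = (SUP \<delta> \<in> {0<..}. hausdorff_pre s \<delta> A)"

definition hausdorff_measure :: "real \<Rightarrow> 'a::metric_space measure" where
  "hausdorff_measure s = measure_of UNIV (sets borel) (hausdorff_outer s)"

abbreviation Hn1 :: "(real^'n) measure" where
  "Hn1 \<equiv> hausdorff_measure (real CARD('n) - 1)"

text \<open>A hypersurface: a Borel set Z together with a (measurable) unit normal field nrm,
  defined (of norm 1) for H_(n-1)-almost every point of Z.\<close>
definition hypersurface :: "(real^'n) set \<Rightarrow> (real^'n \<Rightarrow> real^'n) \<Rightarrow> bool" where
  "hypersurface Z nrm \<longleftrightarrow> Z \<in> sets borel \<and> nrm \<in> borel_measurable borel \<and>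
     (AE x in Hn1. x \<in> Z \<longrightarrow> norm (nrm x) = 1)"

definition surf :: "(real^'n) set \<Rightarrow> (real^'n \<Rightarrow> real^'n) \<Rightarrow> real^'n \<Rightarrow> ennreal" where
  "surf Z nrm e = (\<integral>\<^sup>+ x \<in> Z. ennreal \<bar>e \<bullet> nrm x\<bar> \<partial>Hn1)"

definition Kset :: "(real^'n) set \<Rightarrow> (real^'n \<Rightarrow> real^'n) \<Rightarrow> (real^'n) set" where
  "Kset Z nrm = {u \<in> cball 0 1. u = 0 \<or> surf Z nrm (sgn u) \<le> ennreal (1 / norm u)}"

definition vis :: "(real^'n) set \<Rightarrow> (real^'n \<Rightarrow> real^'n) \<Rightarrow> real" where
  "vis Z nrm = (measure lebesgue (Kset Z nrm :: (real^'n) set)) powr (- 1 / real CARD('n))"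

section \<open>Unsigned d-volume of a parallelepiped: sqrt of the Gram determinant\<close>

definition gram_det :: "nat \<Rightarrow> (nat \<Rightarrow> 'a::real_inner) \<Rightarrow> real" where
  "gram_det d v = (\<Sum>p \<in> {p. p permutes {..<d}}. of_int (sign p) * (\<Prod>i<d. v i \<bullet> v (p i)))"

definition wedge :: "nat \<Rightarrow> (nat \<Rightarrow> 'a::real_inner) \<Rightarrow> real" where
  "wedge d v = sqrt (gram_det d v)"

end

theory Submission
  imports Defs
begin

text \<open>Write N u for surf_u(Z). The hypotheses make N a norm squeezed between c0 |u| and C0 D |u|,
  and K(Z) is the intersection of the Euclidean unit ball with the unit ball of N. Complete the unit
  vectors v_1, ..., v_d by an orthonormal basis of their orthogonal complement and divide the i-th
  vector by n M_i, where M_i bounds both its length and its N-value (M_i is a multiple of N v_i for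
  i \<le> d and of D otherwise). The symmetric parallelepiped spanned by these vectors lies in K(Z), and
  its volume 2^n (v_1 \<and> ... \<and> v_d) / (n^n M_1 ... M_n) bounds vol K(Z) from below, hence vis(Z)
  from above.\<close>

section \<open>Relabelling coordinates\<close>

lemma prod_Basis_cart: "(\<Prod>b\<in>Basis. (x::real^'n) \<bullet> b) = (\<Prod>i\<in>UNIV. x $ i)"
  by (simp add: Basis_vec_def cart_eq_inner_axis axis_eq_axis prod.UNION_disjoint)

lemma lborel_vec_reindex:
  fixes h :: "'m::finite \<Rightarrow> 'n::finite"
  assumes "bij h"
  shows "distr lborel borel (\<lambda>x::real^'n. \<chi> j. x $ h j) = (lborel :: (real^'m) measure)"
proof (rule lborel_eqI[symmetric])
  fix l u :: "real^'m" assume le: "\<And>b. b \<in> Basis \<Longrightarrow> l \<bullet> b \<le> u \<bullet> b"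
  let ?T = "\<lambda>x::real^'n. \<chi> j. x $ h j"
  let ?g = "inv h"
  define l' u' :: "real^'n" where "l' = (\<chi> i. l $ ?g i)" and "u' = (\<chi> i. u $ ?g i)"
  have hg: "h (?g i) = i" "?g (h j) = j" for i j
    using assms by (simp_all add: bij_is_surj surj_f_inv_f bij_is_inj)
  have meas: "?T \<in> borel_measurable borel"
    by (intro borel_measurable_continuous_onI continuous_intros)
  have pre: "?T -` box l u = box l' u'"
    by (auto simp: mem_box_cart l'_def u'_def) (metis hg)+
  have "l $ j \<le> u $ j" for j
    using le[of "axis j 1"] by (auto simp: Basis_vec_def inner_axis)
  then have "\<forall>b\<in>Basis. l' \<bullet> b \<le> u' \<bullet> b"
    by (auto simp: Basis_vec_def inner_axis l'_def u'_def)
  then have "emeasure (distr lborel borel ?T) (box l u) = (\<Prod>i\<in>UNIV. u $ ?g i - l $ ?g i)"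
    using meas by (simp add: emeasure_distr pre emeasure_lborel_box_eq prod_Basis_cart)
      (simp add: l'_def u'_def)
  also have "(\<Prod>i\<in>UNIV. u $ ?g i - l $ ?g i) = (\<Prod>j\<in>UNIV. u $ j - l $ j)"
    using prod.reindex_bij_betw[of ?g UNIV UNIV "\<lambda>j. u $ j - l $ j"] assms bij_imp_bij_inv
    by (auto simp: bij_betw_def)
  finally show "emeasure (distr lborel borel ?T) (box l u) = (\<Prod>b\<in>Basis. (u - l) \<bullet> b)"
    by (simp add: prod_Basis_cart)
qed simp

lemma measure_vec_reindex_image:
  fixes h :: "'m::finite \<Rightarrow> 'n::finite"
  assumes "bij h" and B: "B \<in> sets borel"
  shows "measure lebesgue ((\<lambda>x::real^'n. \<chi> j. x $ h j) ` B) = measure lebesgue B"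
proof -
  let ?T = "\<lambda>x::real^'n. \<chi> j. x $ h j"
  let ?S = "\<lambda>y::real^'m. \<chi> i. y $ inv h i"
  have hg: "h (inv h i) = i" "inv h (h j) = j" for i j
    using assms(1) by (simp_all add: bij_is_surj surj_f_inv_f bij_is_inj)
  have "inj ?T"
    by (rule inj_on_inverseI[of _ ?S]) (simp add: vec_eq_iff hg)
  have "?T ` B = ?S -` B"
  proof (intro set_eqI iffI)
    fix y assume "y \<in> ?S -` B"
    moreover have "y = ?T (?S y)"
      by (simp add: vec_eq_iff hg)
    ultimately show "y \<in> ?T ` B"
      by blast
  qed (auto simp: hg)
  moreover have "?S \<in> borel_measurable borel"
    by (intro borel_measurable_continuous_onI continuous_intros)
  ultimately have TB: "?T ` B \<in> sets borel"
    using measurable_sets_borel[OF _ B] by fastforce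
  have "?T \<in> borel_measurable borel"
    by (intro borel_measurable_continuous_onI continuous_intros)
  then have "emeasure (distr lborel borel ?T) (?T ` B) = emeasure lborel B"
    using TB \<open>inj ?T\<close> by (subst emeasure_distr) (auto simp: inj_vimage_image_eq)
  then show ?thesis
    using B TB by (simp add: measure_def lborel_vec_reindex[OF assms(1)])
qed

section \<open>Volume of a parallelepiped\<close>

text \<open>The library computes the measure of linear images only for wellordered index types;
  'a idx is a wellordered copy of the index type 'a, namely the numbers below CARD('a).\<close>

typedef ('a::finite) idx = "{..<CARD('a)}"
  by (rule exI[of _ 0]) simp

instantiation idx :: (finite) linorder
begin
definition less_eq_idx :: "'a idx \<Rightarrow> 'a idx \<Rightarrow> bool" where
  "x \<le> y \<longleftrightarrow> Rep_idx x \<le> Rep_idx y"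
definition less_idx :: "'a idx \<Rightarrow> 'a idx \<Rightarrow> bool" where
  "x < y \<longleftrightarrow> Rep_idx x < Rep_idx y"
instance
  by standard (auto simp: less_eq_idx_def less_idx_def Rep_idx_inject)
end

instance idx :: (finite) wellorder
proof
  fix P :: "'a idx \<Rightarrow> bool" and a
  assume step: "\<And>x. (\<And>y. y < x \<Longrightarrow> P y) \<Longrightarrow> P x"
  show "P a"
    by (induction "Rep_idx a" arbitrary: a rule: less_induct) (auto intro: step simp: less_idx_def)
qed

instance idx :: (finite) finite
proof
  have "(UNIV :: 'a idx set) = Abs_idx ` {..<CARD('a)}"
    by (simp add: type_definition.Abs_image[OF type_definition_idx])
  then show "finite (UNIV :: 'a idx set)"
    by (metis finite_imageI finite_lessThan)
qed

lemma card_idx: "CARD('a::finite idx) = CARD('a)"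
  using type_definition.card[OF type_definition_idx] by simp

lemma bij_betw_Rep_idx: "bij_betw Rep_idx (UNIV :: 'a::finite idx set) {..<CARD('a)}"
  by (metis type_definition.Rep_range[OF type_definition_idx] bij_betw_def inj_on_def Rep_idx_inject)

lemma det_reindex_nat:
  fixes G :: "nat \<Rightarrow> nat \<Rightarrow> real" and \<sigma> :: "'n::finite \<Rightarrow> nat"
  assumes bij: "bij_betw \<sigma> UNIV {..<CARD('n)}"
  shows "det (\<chi> i j. G (\<sigma> i) (\<sigma> j) :: real^'n^'n)
     = (\<Sum>p | p permutes {..<CARD('n)}. of_int (sign p) * (\<Prod>i<CARD('n). G i (p i)))"
proof -
  let ?n = "CARD('n)"
  define \<tau> where "\<tau> = inv_into UNIV \<sigma>"
  have \<tau>\<sigma>: "\<tau> (\<sigma> x) = x" for x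
    unfolding \<tau>_def using bij by (simp add: bij_betw_imp_inj_on)
  have \<sigma>\<tau>: "x < ?n \<Longrightarrow> \<sigma> (\<tau> x) = x" for x
    unfolding \<tau>_def using bij by (simp add: bij_betw_inv_into_right)
  have bij\<tau>: "bij_betw \<tau> {..<?n} UNIV"
    unfolding \<tau>_def by (rule bij_betw_inv_into[OF bij])
  define conj where "conj p = (\<lambda>x. if x \<in> {..<?n} then \<sigma> (p (\<tau> x)) else x)" for p :: "'n \<Rightarrow> 'n"
  define unconj where "unconj q = (\<lambda>x. \<tau> (q (\<sigma> x)))" for q :: "nat \<Rightarrow> nat"
  have conj: "conj p permutes {..<?n}" "sign (conj p) = sign p" if "p permutes UNIV" for p
  proof -
    interpret permutes_bij_finite p UNIV "{..<?n}" \<sigma> \<tau> "conj p"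
      using that bij \<tau>\<sigma> by unfold_locales (auto simp: conj_def)
    show "conj p permutes {..<?n}" "sign (conj p) = sign p"
      using permutes_p' sign_p' by simp_all
  qed
  have unconj: "unconj q permutes UNIV" if "q permutes {..<?n}" for q
  proof -
    interpret permutes_bij q "{..<?n}" UNIV \<tau> \<sigma> "unconj q"
      using that bij\<tau> \<sigma>\<tau> by unfold_locales (auto simp: unconj_def)
    show ?thesis
      using permutes_p' .
  qed
  show ?thesis
    unfolding det_def
  proof (rule sum.reindex_bij_witness[where i=unconj and j=conj])
    fix p :: "'n \<Rightarrow> 'n" assume p: "p \<in> {p. p permutes UNIV}"
    then show "unconj (conj p) = p" "conj p \<in> {p. p permutes {..<?n}}"
      using bij conj by (auto simp: fun_eq_iff unconj_def conj_def \<tau>\<sigma> bij_betw_def)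
    have "(\<Prod>x<?n. G x (conj p x)) = (\<Prod>y\<in>UNIV. G (\<sigma> y) (conj p (\<sigma> y)))"
      using prod.reindex_bij_betw[OF bij, of "\<lambda>x. G x (conj p x)"] by simp
    also have "\<dots> = (\<Prod>y\<in>UNIV. G (\<sigma> y) (\<sigma> (p y)))"
      using bij by (intro prod.cong) (auto simp: conj_def \<tau>\<sigma> bij_betw_def)
    finally show "of_int (sign (conj p)) * (\<Prod>x<?n. G x (conj p x))
        = of_int (sign p) * (\<Prod>y\<in>UNIV. (\<chi> i j. G (\<sigma> i) (\<sigma> j) :: real^'n^'n) $ y $ p y)"
      using conj p by simp
  next
    fix q assume q: "q \<in> {q. q permutes {..<?n}}"
    then have "q x \<in> {..<?n}" if "x < ?n" for x
      using permutes_in_image that by fastforce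
    then show "conj (unconj q) = q" "unconj q \<in> {p. p permutes UNIV}"
      using q unconj by (auto simp: fun_eq_iff conj_def unconj_def \<sigma>\<tau> permutes_not_in)
  qed
qed

definition parallelepiped :: "nat \<Rightarrow> (nat \<Rightarrow> 'a::real_vector) \<Rightarrow> 'a set" where
  "parallelepiped n b = {\<Sum>i<n. t i *\<^sub>R b i | t. \<forall>i<n. \<bar>t i\<bar> \<le> 1}"

lemma parallelepiped_eq_image_cube:
  fixes b :: "nat \<Rightarrow> 'a::real_vector"
  shows "parallelepiped CARD('n) b
     = (\<lambda>y. \<Sum>j\<in>UNIV. y $ j *\<^sub>R b (Rep_idx j)) ` cbox (- 1) (1 :: real^'n::finite idx)"
proof -
  let ?n = "CARD('n)"
  have sum_Rep: "(\<Sum>j\<in>UNIV. f (Rep_idx (j :: 'n idx))) = (\<Sum>i<?n. f i)" for f :: "nat \<Rightarrow> 'a"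
    using sum.reindex_bij_betw[OF bij_betw_Rep_idx, of f] by simp
  show ?thesis
  proof (intro set_eqI iffI)
    fix x assume "x \<in> parallelepiped ?n b"
    then obtain t where x: "x = (\<Sum>i<?n. t i *\<^sub>R b i)" and t: "\<forall>i<?n. \<bar>t i\<bar> \<le> 1"
      by (auto simp: parallelepiped_def)
    have "(\<chi> j. t (Rep_idx j)) \<in> cbox (- 1) (1 :: real^'n idx)"
      using t Rep_idx by (auto simp: mem_box_cart abs_le_iff)
    moreover have "x = (\<Sum>j\<in>UNIV. (\<chi> j. t (Rep_idx j) :: real^'n idx) $ j *\<^sub>R b (Rep_idx j))"
      unfolding x using sum_Rep[of "\<lambda>i. t i *\<^sub>R b i"] by simp
    ultimately show "x \<in> (\<lambda>y. \<Sum>j\<in>UNIV. y $ j *\<^sub>R b (Rep_idx j)) ` cbox (- 1) (1 :: real^'n idx)"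
      by blast
  next
    fix x assume "x \<in> (\<lambda>y. \<Sum>j\<in>UNIV. y $ j *\<^sub>R b (Rep_idx j)) ` cbox (- 1) (1 :: real^'n idx)"
    then obtain y :: "real^'n idx" where y: "y \<in> cbox (- 1) 1" and x: "x = (\<Sum>j\<in>UNIV. y $ j *\<^sub>R b (Rep_idx j))"
      by auto
    define t where "t i = y $ Abs_idx i" for i
    have "x = (\<Sum>i<?n. t i *\<^sub>R b i)"
      by (simp add: x t_def sum_Rep[of "\<lambda>i. y $ Abs_idx i *\<^sub>R b i", symmetric] Rep_idx_inverse)
    moreover have "\<forall>i<?n. \<bar>t i\<bar> \<le> 1"
      using y by (auto simp: t_def mem_box_cart abs_le_iff)
    ultimately show "x \<in> parallelepiped ?n b"
      by (auto simp: parallelepiped_def)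
  qed
qed

lemma compact_parallelepiped: "compact (parallelepiped CARD('n::finite) (b :: nat \<Rightarrow> 'a::real_normed_vector))"
  unfolding parallelepiped_eq_image_cube
  by (intro compact_continuous_image continuous_intros compact_cbox)

lemma inner_vec_reindex:
  fixes k :: "'m::finite \<Rightarrow> 'n::finite" and x y :: "real^'n"
  assumes "bij k"
  shows "(\<chi> j. x $ k j) \<bullet> (\<chi> j. y $ k j) = x \<bullet> y"
  using sum.reindex_bij_betw[OF assms, of "\<lambda>i. x $ i * y $ i"] by (simp add: inner_vec_def)

lemma measure_cube: "measure lebesgue (cbox (- 1) (1 :: real^'n::finite)) = 2 ^ CARD('n)"
proof -
  have "(0 :: real^'n) \<in> cbox (- 1) 1"
    by (simp add: mem_box_cart)
  then show ?thesis
    using content_cbox_cart[of "- 1" "1 :: real^'n"] by auto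
qed

lemma measure_parallelepiped:
  fixes b :: "nat \<Rightarrow> real^'n::finite"
  shows "measure lebesgue (parallelepiped CARD('n) b) = 2 ^ CARD('n) * wedge CARD('n) b"
proof -
  let ?n = "CARD('n)"
  let ?Q = "cbox (- 1) (1 :: real^'n idx)"
  \<comment> \<open>The parallelepiped is the image of a cube under a linear map whose Gram matrix is that of b.\<close>
  define F where "F y = (\<Sum>j\<in>UNIV. y $ j *\<^sub>R b (Rep_idx j))" for y :: "real^'n idx"
  obtain k :: "'n idx \<Rightarrow> 'n" where k: "bij k"
    using finite_same_card_bij[of "UNIV :: 'n idx set" "UNIV :: 'n set"] by (auto simp: card_idx)
  define U where "U x = (\<chi> j. x $ k j)" for x :: "real^'n"
  have lin: "linear (U \<circ> F)"
    unfolding U_def F_def o_def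
    by (rule linearI) (simp_all add: vec_eq_iff sum.distrib scaleR_add_left sum_distrib_left mult.assoc)
  have "F (axis j 1) = b (Rep_idx j)" for j
    unfolding F_def by (subst sum.remove[of _ j]) (auto simp: axis_def)
  then have "matrix (U \<circ> F) = (\<chi> i j. U (b (Rep_idx j)) $ i)"
    by (simp add: matrix_def)
  then have "transpose (matrix (U \<circ> F)) ** matrix (U \<circ> F) = (\<chi> i j. b (Rep_idx i) \<bullet> b (Rep_idx j))"
    using inner_vec_reindex[OF k]
    by (simp add: matrix_matrix_mult_def transpose_def vec_eq_iff U_def) (simp add: inner_vec_def)
  moreover have "det (\<chi> i j. b (Rep_idx i) \<bullet> b (Rep_idx j) :: real^'n idx^'n idx) = gram_det ?n b"
    using det_reindex_nat[of "Rep_idx :: 'n idx \<Rightarrow> nat" "\<lambda>i j. b i \<bullet> b j"] bij_betw_Rep_idx[where 'a='n]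
    by (simp add: card_idx gram_det_def)
  ultimately have "det (matrix (U \<circ> F)) ^ 2 = gram_det ?n b"
    by (metis det_mul det_transpose power2_eq_square)
  then have det: "\<bar>det (matrix (U \<circ> F))\<bar> = wedge ?n b"
    by (metis real_sqrt_abs wedge_def)
  have "(U \<circ> F) ` ?Q = U ` parallelepiped ?n b"
    by (simp add: parallelepiped_eq_image_cube image_comp F_def)
  moreover have "parallelepiped ?n b \<in> sets borel"
    by (intro borel_closed compact_imp_closed compact_parallelepiped)
  ultimately have "measure lebesgue (parallelepiped ?n b) = measure lebesgue ((U \<circ> F) ` ?Q)"
    unfolding U_def using measure_vec_reindex_image[OF k] by simp
  also have "\<dots> = wedge ?n b * 2 ^ ?n"
    using measure_linear_image[OF lin, of ?Q] det measure_cube[where 'n="'n idx"] by (simp add: card_idx)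
  finally show ?thesis
    by simp
qed

section \<open>Gram determinants\<close>

lemma gram_det_scaleR:
  fixes a :: "nat \<Rightarrow> 'a::real_inner"
  shows "gram_det n (\<lambda>i. c i *\<^sub>R a i) = (\<Prod>i<n. c i)^2 * gram_det n a"
proof -
  have "of_int (sign p) * (\<Prod>i<n. (c i *\<^sub>R a i) \<bullet> (c (p i) *\<^sub>R a (p i)))
      = (\<Prod>i<n. c i)^2 * (of_int (sign p) * (\<Prod>i<n. a i \<bullet> a (p i)))" if p: "p permutes {..<n}" for p
  proof -
    have "(\<Prod>i<n. (c i *\<^sub>R a i) \<bullet> (c (p i) *\<^sub>R a (p i)))
        = (\<Prod>i<n. c i) * (\<Prod>i<n. c (p i)) * (\<Prod>i<n. a i \<bullet> a (p i))"
      by (simp add: prod.distrib[symmetric] mult_ac)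
    also have "(\<Prod>i<n. c (p i)) = (\<Prod>i<n. c i)"
      using prod.permute[OF p, of c] by (simp add: o_def)
    finally show ?thesis by (simp add: power2_eq_square)
  qed
  then show ?thesis
    unfolding gram_det_def sum_distrib_left by (intro sum.cong) auto
qed

lemma wedge_scaleR: "wedge n (\<lambda>i. c i *\<^sub>R a i) = \<bar>\<Prod>i<n. c i\<bar> * wedge n a"
  by (simp add: wedge_def gram_det_scaleR real_sqrt_mult)

lemma gram_det_extend:
  fixes a :: "nat \<Rightarrow> 'a::real_inner"
  assumes "d \<le> n" and orth: "\<And>i j. d \<le> i \<Longrightarrow> i < n \<Longrightarrow> j < n \<Longrightarrow> a i \<bullet> a j = (if i = j then 1 else 0)"
  shows "gram_det n a = gram_det d a"
proof -
  let ?t = "\<lambda>m p. of_int (sign p) * (\<Prod>i<m. a i \<bullet> a (p i))"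
  have "gram_det n a = (\<Sum>p | p permutes {..<d}. ?t n p)"
    unfolding gram_det_def
  proof (rule sum.mono_neutral_right)
    show "{p. p permutes {..<d}} \<subseteq> {p. p permutes {..<n}}"
      using assms(1) by (auto intro: permutes_subset)
    show "\<forall>p\<in>{p. p permutes {..<n}} - {p. p permutes {..<d}}. ?t n p = 0"
    proof
      fix p assume p: "p \<in> {p. p permutes {..<n}} - {p. p permutes {..<d}}"
      then have pn: "p permutes {..<n}" by auto
      obtain i where i: "d \<le> i" "i < n" "p i \<noteq> i"
        using p permutes_superset[OF pn, of "{..<d}"] by auto
      then have "a i \<bullet> a (p i) = 0"
        using orth[OF i(1,2)] permutes_in_image[OF pn] by simp
      then show "?t n p = 0"
        using i by (auto simp: prod_zero_iff)
    qed
  qed (simp add: finite_permutations)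
  also have "\<dots> = (\<Sum>p | p permutes {..<d}. ?t d p)"
  proof (rule sum.cong[OF refl])
    fix p assume "p \<in> {p. p permutes {..<d}}"
    then have pd: "p permutes {..<d}" by auto
    have "{..<n} = {..<d} \<union> {d..<n}" using assms(1) by auto
    then have "(\<Prod>i<n. a i \<bullet> a (p i)) = (\<Prod>i<d. a i \<bullet> a (p i)) * (\<Prod>i\<in>{d..<n}. a i \<bullet> a (p i))"
      by (metis prod.union_disjoint finite_lessThan finite_atLeastLessThan ivl_disj_int_one(2))
    also have "(\<Prod>i\<in>{d..<n}. a i \<bullet> a (p i)) = 1"
      using orth permutes_not_in[OF pd] by (intro prod.neutral) auto
    finally show "?t n p = ?t d p" by simp
  qed
  finally show ?thesis unfolding gram_det_def .
qed

lemma gram_det_cong: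
  assumes "\<And>i. i < d \<Longrightarrow> a i = b i"
  shows "gram_det d a = gram_det d b"
proof -
  have "(\<Prod>i<d. a i \<bullet> a (p i)) = (\<Prod>i<d. b i \<bullet> b (p i))" if "p permutes {..<d}" for p
    using assms permutes_in_image[OF that] by (intro prod.cong) auto
  then show ?thesis
    unfolding gram_det_def by (intro sum.cong) auto
qed

lemma orthonormal_family_orthogonal_to:
  fixes v :: "nat \<Rightarrow> 'a::euclidean_space"
  assumes "d \<le> DIM('a)"
  obtains w where "\<And>i. d \<le> i \<Longrightarrow> i < DIM('a) \<Longrightarrow> norm (w i) = 1"
    and "\<And>i j. d \<le> i \<Longrightarrow> i < DIM('a) \<Longrightarrow> d \<le> j \<Longrightarrow> j < DIM('a) \<Longrightarrow> i \<noteq> j \<Longrightarrow> w i \<bullet> w j = 0"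
    and "\<And>i k. d \<le> i \<Longrightarrow> i < DIM('a) \<Longrightarrow> k < d \<Longrightarrow> v k \<bullet> w i = 0"
proof -
  let ?n = "DIM('a)"
  let ?V = "span (v ` {..<d})"
  define S where "S = {y. \<forall>x\<in>?V. orthogonal x y}"
  have "dim S + dim ?V = ?n"
    using dim_subspace_orthogonal_to_vectors[of ?V UNIV] by (simp add: S_def)
  moreover have "dim ?V \<le> d"
    using dim_le_card'[of "v ` {..<d}"] card_image_le[of "{..<d}" v] by simp
  ultimately have dim_S: "?n - d \<le> dim S"
    by linarith
  obtain B where B: "B \<subseteq> S" "pairwise orthogonal B" "\<And>x. x \<in> B \<Longrightarrow> norm x = 1"
    "independent B" "card B = dim S"
  proof (rule orthonormal_basis_subspace)
    show "subspace S"
      unfolding S_def using subspace_orthogonal_to_vectors[of ?V] by simp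
  qed (auto simp: pairwise_def)
  have "finite B"
    using B(4) independent_imp_finite by blast
  then obtain w where w: "w ` {d..<?n} \<subseteq> B" "inj_on w {d..<?n}"
    using card_le_inj[of "{d..<?n}" B] dim_S B(5) by auto
  have w_B: "w i \<in> B" if "d \<le> i" "i < ?n" for i
    using w(1) that by auto
  show ?thesis
  proof (rule that[of w])
    fix i j assume "d \<le> i" "i < ?n" "d \<le> j" "j < ?n" "i \<noteq> j"
    then have "w i \<in> B" "w j \<in> B" "w i \<noteq> w j"
      using w_B w(2) by (auto simp: inj_on_def)
    then show "w i \<bullet> w j = 0"
      using B(2) by (auto simp: pairwise_def orthogonal_def)
  next
    fix i k assume "d \<le> i" "i < ?n" "k < d"
    then have "w i \<in> S" "v k \<in> ?V"
      using w_B B(1) by (auto simp: span_base)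
    then show "v k \<bullet> w i = 0"
      by (auto simp: S_def orthogonal_def)
  qed (use w_B B(3) in auto)
qed

lemma gram_det_orthonormal_extension:
  fixes v :: "nat \<Rightarrow> 'a::euclidean_space"
  assumes "d \<le> DIM('a)"
  obtains a where "\<And>i. i < d \<Longrightarrow> a i = v i" "\<And>i. d \<le> i \<Longrightarrow> i < DIM('a) \<Longrightarrow> norm (a i) = 1"
    "gram_det DIM('a) a = gram_det d v"
proof -
  obtain w where w_unit: "\<And>i. d \<le> i \<Longrightarrow> i < DIM('a) \<Longrightarrow> norm (w i) = 1"
    and w_orth: "\<And>i j. d \<le> i \<Longrightarrow> i < DIM('a) \<Longrightarrow> d \<le> j \<Longrightarrow> j < DIM('a) \<Longrightarrow> i \<noteq> j \<Longrightarrow> w i \<bullet> w j = 0"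
    and w_v: "\<And>i k. d \<le> i \<Longrightarrow> i < DIM('a) \<Longrightarrow> k < d \<Longrightarrow> v k \<bullet> w i = 0"
    using orthonormal_family_orthogonal_to[OF assms] by blast
  define a where "a i = (if i < d then v i else w i)" for i
  have "gram_det DIM('a) a = gram_det d a"
  proof (rule gram_det_extend[OF assms])
    fix i j assume "d \<le> i" "i < DIM('a)" "j < DIM('a)"
    then show "a i \<bullet> a j = (if i = j then 1 else 0)"
      using w_unit[of i] w_orth[of i j] w_v[of i j]
      by (auto simp: a_def inner_commute power2_norm_eq_inner[symmetric])
  qed
  also have "\<dots> = gram_det d v"
    by (rule gram_det_cong) (simp add: a_def)
  finally show ?thesis
    using that[of a] w_unit by (simp add: a_def)
qed

lemma wedge_nonneg:
  fixes v :: "nat \<Rightarrow> real^'n::finite"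
  assumes "d \<le> CARD('n)"
  shows "0 \<le> wedge d v"
proof -
  obtain a :: "nat \<Rightarrow> real^'n" where "wedge CARD('n) a = wedge d v"
    by (rule gram_det_orthonormal_extension[of d v]) (use assms in \<open>auto simp: wedge_def\<close>)
  moreover have "0 \<le> 2 ^ CARD('n) * wedge CARD('n) a"
    using measure_parallelepiped[of a] measure_nonneg[of lebesgue "parallelepiped CARD('n) a"] by simp
  ultimately have "0 \<le> 2 ^ CARD('n) * wedge d v"
    by simp
  then show ?thesis
    by (metis mult_zero_right mult_le_cancel_left_pos zero_less_power zero_less_numeral)
qed

section \<open>Seminorm balls\<close>

lemma seminorm_nonneg:
  fixes N :: "'a::real_vector \<Rightarrow> real"
  assumes scale: "\<And>c u. N (c *\<^sub>R u) = \<bar>c\<bar> * N u" and add: "\<And>u w. N (u + w) \<le> N u + N w"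
  shows "0 \<le> N u"
  using add[of u "- u"] scale[of 0 0] scale[of "- 1" u] by simp

lemma seminorm_sum_le:
  fixes N :: "'a::real_vector \<Rightarrow> real"
  assumes scale: "\<And>c u. N (c *\<^sub>R u) = \<bar>c\<bar> * N u" and add: "\<And>u w. N (u + w) \<le> N u + N w"
  shows "N (\<Sum>i\<in>I. t i *\<^sub>R b i) \<le> (\<Sum>i\<in>I. \<bar>t i\<bar> * N (b i))"
proof (induction I rule: infinite_finite_induct)
  case (insert i I)
  then show ?case
    using add[of "t i *\<^sub>R b i" "\<Sum>i\<in>I. t i *\<^sub>R b i"] by (simp add: scale)
qed (use scale[of 0 0] in simp_all)

lemma seminorm_parallelepiped_le:
  fixes F :: "'a::real_vector \<Rightarrow> real"
  assumes scale: "\<And>c u. F (c *\<^sub>R u) = \<bar>c\<bar> * F u" and add: "\<And>u w. F (u + w) \<le> F u + F w"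
    and b: "\<And>i. i < n \<Longrightarrow> F (b i) \<le> 1 / real n" and x: "x \<in> parallelepiped n b"
  shows "F x \<le> 1"
proof -
  obtain t where x: "x = (\<Sum>i<n. t i *\<^sub>R b i)" and t: "\<forall>i<n. \<bar>t i\<bar> \<le> 1"
    using x by (auto simp: parallelepiped_def)
  have "F x \<le> (\<Sum>i<n. \<bar>t i\<bar> * F (b i))"
    unfolding x by (rule seminorm_sum_le[OF scale add])
  also have "\<dots> \<le> (\<Sum>i<n. 1 * (1 / real n))"
    using t b seminorm_nonneg[OF scale add] by (intro sum_mono mult_mono) auto
  finally show ?thesis
    by (simp split: if_split_asm)
qed

lemma convex_seminorm_sublevel:
  fixes N :: "'a::real_vector \<Rightarrow> real"
  assumes scale: "\<And>c u. N (c *\<^sub>R u) = \<bar>c\<bar> * N u" and add: "\<And>u w. N (u + w) \<le> N u + N w"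
  shows "convex {u. N u \<le> r}"
proof (rule convexI)
  fix x y :: 'a and s t :: real
  assume "x \<in> {u. N u \<le> r}" "y \<in> {u. N u \<le> r}" "0 \<le> s" "0 \<le> t" "s + t = 1"
  then have "N (s *\<^sub>R x) + N (t *\<^sub>R y) \<le> s * r + t * r"
    by (simp add: scale add_mono mult_left_mono)
  then show "s *\<^sub>R x + t *\<^sub>R y \<in> {u. N u \<le> r}"
    using add[of "s *\<^sub>R x" "t *\<^sub>R y"] \<open>s + t = 1\<close> by (simp add: distrib_right[symmetric])
qed

lemma measure_seminorm_ball_ge:
  fixes N :: "real^'n::finite \<Rightarrow> real" and a :: "nat \<Rightarrow> real^'n" and M :: "nat \<Rightarrow> real"
  assumes scale: "\<And>c u. N (c *\<^sub>R u) = \<bar>c\<bar> * N u" and add: "\<And>u w. N (u + w) \<le> N u + N w"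
    and M: "\<And>i. i < CARD('n) \<Longrightarrow> 0 < M i \<and> norm (a i) \<le> M i \<and> N (a i) \<le> M i"
  shows "2 ^ CARD('n) * wedge CARD('n) a
    \<le> real CARD('n) ^ CARD('n) * (\<Prod>i<CARD('n). M i) * measure lebesgue {u \<in> cball 0 1. N u \<le> 1}"
proof -
  let ?n = "CARD('n)"
  let ?K = "{u \<in> cball 0 1. N u \<le> 1}"
  define c where "c i = 1 / (real ?n * M i)" for i
  define b where "b i = c i *\<^sub>R a i" for i
  have c_pos: "0 < c i" if "i < ?n" for i
    using M[OF that] by (simp add: c_def)
  have b_small: "F (b i) \<le> 1 / real ?n"
    if "\<And>c u. F (c *\<^sub>R u) = \<bar>c\<bar> * F u" and "F (a i) \<le> M i" and "i < ?n" for F i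
    using that M[OF \<open>i < ?n\<close>] c_pos[OF \<open>i < ?n\<close>] by (simp add: b_def c_def field_simps)
  have "parallelepiped ?n b \<subseteq> ?K"
    using seminorm_parallelepiped_le[of N, OF scale add b_small[of N, OF scale]]
      seminorm_parallelepiped_le[of norm, OF _ norm_triangle_ineq b_small[of norm]] M
    by auto
  moreover have "?K = cball 0 1 \<inter> {u. N u \<le> 1}"
    by auto
  then have "convex ?K"
    using convex_Int[OF convex_cball convex_seminorm_sublevel[OF scale add]] by simp
  ultimately have "measure lebesgue (parallelepiped ?n b) \<le> measure lebesgue ?K"
    using lmeasurable_compact[OF compact_parallelepiped]
    by (intro measure_mono_fmeasurable measurable_convex) (auto intro: bounded_subset[of "cball 0 1"])
  moreover have "wedge ?n b = (\<Prod>i<?n. c i) * wedge ?n a"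
    unfolding b_def wedge_scaleR using c_pos by (subst abs_of_pos) (auto intro: prod_pos)
  moreover have "(\<Prod>i<?n. c i) = 1 / (real ?n ^ ?n * (\<Prod>i<?n. M i))"
    by (simp add: c_def prod_dividef prod.distrib)
  moreover have "0 < real ?n ^ ?n * (\<Prod>i<?n. M i)"
    using M by (intro mult_pos_pos prod_pos) auto
  ultimately show ?thesis
    by (simp add: measure_parallelepiped field_simps)
qed

section \<open>Directional surface area\<close>

lemma sets_hausdorff_measure: "sets (hausdorff_measure s :: 'a::metric_space measure) = sets borel"
  unfolding hausdorff_measure_def
  by (simp add: sets_measure_of_conv sets.sigma_sets_eq[of borel, simplified])

lemma surf_integrand_measurable:
  assumes "hypersurface Z nrm"
  shows "(\<lambda>x. ennreal \<bar>u \<bullet> nrm x\<bar> * indicator Z x) \<in> borel_measurable Hn1"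
proof -
  from assms have [measurable]: "nrm \<in> borel_measurable borel" "Z \<in> sets borel"
    unfolding hypersurface_def by auto
  have "(\<lambda>x. ennreal \<bar>u \<bullet> nrm x\<bar> * indicator Z x) \<in> borel_measurable borel"
    by measurable
  then show ?thesis
    using measurable_cong_sets[OF sets_hausdorff_measure refl] by blast
qed

lemma surf_scaleR:
  assumes "hypersurface Z nrm"
  shows "surf Z nrm (c *\<^sub>R u) = ennreal \<bar>c\<bar> * surf Z nrm u"
proof -
  have "surf Z nrm (c *\<^sub>R u) = (\<integral>\<^sup>+ x. ennreal \<bar>c\<bar> * (ennreal \<bar>u \<bullet> nrm x\<bar> * indicator Z x) \<partial>Hn1)"
    unfolding surf_def by (intro nn_integral_cong) (simp add: abs_mult ennreal_mult mult.assoc)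
  also have "\<dots> = ennreal \<bar>c\<bar> * surf Z nrm u"
    unfolding surf_def by (rule nn_integral_cmult[OF surf_integrand_measurable[OF assms]])
  finally show ?thesis .
qed

lemma surf_add_le:
  assumes "hypersurface Z nrm"
  shows "surf Z nrm (u + w) \<le> surf Z nrm u + surf Z nrm w"
proof -
  have "surf Z nrm (u + w)
      \<le> (\<integral>\<^sup>+ x. ennreal \<bar>u \<bullet> nrm x\<bar> * indicator Z x + ennreal \<bar>w \<bullet> nrm x\<bar> * indicator Z x \<partial>Hn1)"
    unfolding surf_def
  proof (intro nn_integral_mono)
    fix x
    have "ennreal \<bar>(u + w) \<bullet> nrm x\<bar> \<le> ennreal \<bar>u \<bullet> nrm x\<bar> + ennreal \<bar>w \<bullet> nrm x\<bar>"
      by (simp add: inner_add_left abs_triangle_ineq flip: ennreal_plus)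
    then show "ennreal \<bar>(u + w) \<bullet> nrm x\<bar> * indicator Z x
        \<le> ennreal \<bar>u \<bullet> nrm x\<bar> * indicator Z x + ennreal \<bar>w \<bullet> nrm x\<bar> * indicator Z x"
      by (cases "x \<in> Z") auto
  qed
  also have "\<dots> = surf Z nrm u + surf Z nrm w"
    unfolding surf_def
    by (rule nn_integral_add[OF surf_integrand_measurable[OF assms] surf_integrand_measurable[OF assms]])
  finally show ?thesis .
qed

lemma enn2real_surf_scaleR:
  "hypersurface Z nrm \<Longrightarrow> enn2real (surf Z nrm (c *\<^sub>R u)) = \<bar>c\<bar> * enn2real (surf Z nrm u)"
  by (simp add: surf_scaleR enn2real_mult)

lemma enn2real_surf_add_le:
  assumes "hypersurface Z nrm" "surf Z nrm u < \<infinity>" "surf Z nrm w < \<infinity>"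
  shows "enn2real (surf Z nrm (u + w)) \<le> enn2real (surf Z nrm u) + enn2real (surf Z nrm w)"
  using enn2real_mono[OF surf_add_le[OF assms(1)]] assms(2,3) by (simp add: enn2real_plus)

lemma surf_homogeneous_bounds:
  assumes Z: "hypersurface Z nrm" and "0 < a"
    and bnd: "\<And>e. norm e = 1 \<Longrightarrow> ennreal a \<le> surf Z nrm e \<and> surf Z nrm e \<le> ennreal b"
  shows "surf Z nrm u < \<infinity>"
    and "a * norm u \<le> enn2real (surf Z nrm u)" and "enn2real (surf Z nrm u) \<le> b * norm u"
proof -
  have "\<exists>r. surf Z nrm u = ennreal (norm u * r) \<and> a \<le> r \<and> r \<le> b"
  proof (cases "u = 0")
    case True
    obtain e :: "real^'a" where "norm e = 1"
      using vector_choose_size[of 1] by auto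
    then have "ennreal a \<le> ennreal b"
      using bnd[of e] by (meson order_trans)
    then have "a \<le> b"
      using \<open>0 < a\<close> by (auto simp: ennreal_le_iff2)
    moreover have "surf Z nrm u = 0"
      using surf_scaleR[OF Z, of 0 u] True by simp
    ultimately show ?thesis
      using True by auto
  next
    case False
    have e: "norm (sgn u) = 1"
      using False by (simp add: norm_sgn)
    then obtain r where r: "surf Z nrm (sgn u) = ennreal r" "0 \<le> r"
      using bnd[of "sgn u"] by (cases "surf Z nrm (sgn u)") (auto simp: top_unique)
    have "surf Z nrm u = surf Z nrm (norm u *\<^sub>R sgn u)"
      using False by (simp add: sgn_div_norm)
    also have "\<dots> = ennreal (norm u * r)"
      using r by (simp add: surf_scaleR[OF Z] ennreal_mult)
    finally have "surf Z nrm u = ennreal (norm u * r)" .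
    then show ?thesis
      using bnd[OF e] r \<open>0 < a\<close> by (auto simp: ennreal_le_iff2)
  qed
  then obtain r where r: "surf Z nrm u = ennreal (norm u * r)" "a \<le> r" "r \<le> b"
    by blast
  then show "surf Z nrm u < \<infinity>"
    and "a * norm u \<le> enn2real (surf Z nrm u)" and "enn2real (surf Z nrm u) \<le> b * norm u"
    using \<open>0 < a\<close> by (auto simp: mult.commute mult_right_mono)
qed

lemma Kset_eq_sublevel:
  assumes Z: "hypersurface Z nrm" and fin: "\<And>u. surf Z nrm u < \<infinity>"
  shows "Kset Z nrm = {u \<in> cball 0 1. enn2real (surf Z nrm u) \<le> 1}"
proof -
  let ?N = "\<lambda>u. enn2real (surf Z nrm u)"
  have N_surf: "surf Z nrm u = ennreal (?N u)" for u
    using fin[of u] by simp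
  have "u \<in> Kset Z nrm \<longleftrightarrow> u \<in> cball 0 1 \<and> ?N u \<le> 1" for u
  proof (cases "u = 0")
    case True
    then show ?thesis
      using enn2real_surf_scaleR[OF Z, of 0 0] by (simp add: Kset_def)
  next
    case False
    have "?N (sgn u) = ?N u / norm u"
      using enn2real_surf_scaleR[OF Z, of "1 / norm u" u] by (simp add: sgn_div_norm divide_inverse_commute)
    then have "surf Z nrm (sgn u) \<le> ennreal (1 / norm u) \<longleftrightarrow> ?N u / norm u \<le> 1 / norm u"
      by (subst N_surf) simp
    also have "\<dots> \<longleftrightarrow> ?N u \<le> 1"
      using False by (simp add: divide_le_cancel)
    finally show ?thesis
      using False by (simp add: Kset_def)
  qed
  then show ?thesis
    by blast
qed

lemma prod_lessThan_if_split:
  "d \<le> n \<Longrightarrow> (\<Prod>i<n. if i < d then f i else c) = (\<Prod>i<d. f i) * c ^ (n - d)"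
proof (induction n)
  case (Suc n)
  then show ?case
    by (cases "d = Suc n") (auto simp: Suc_diff_le mult_ac)
qed simp

lemma measure_Kset_ge:
  fixes v :: "nat \<Rightarrow> real^'n::finite"
  assumes Z: "hypersurface Z nrm" and "0 < c0" "0 < D" and d: "d \<le> CARD('n)"
    and v: "\<And>i. i < d \<Longrightarrow> norm (v i) = 1"
    and bnd: "\<And>e. norm e = 1 \<Longrightarrow> ennreal c0 \<le> surf Z nrm e \<and> surf Z nrm e \<le> ennreal (C0 * D)"
    and \<alpha>: "1 \<le> \<alpha>" "1 / c0 \<le> \<alpha>" and \<beta>: "C0 \<le> \<beta>" "C0 / c0 \<le> \<beta>"
  shows "2 ^ CARD('n) * wedge d v \<le> real CARD('n) ^ CARD('n)
    * (\<alpha> ^ d * (\<Prod>i<d. enn2real (surf Z nrm (v i))) * (\<beta> * D) ^ (CARD('n) - d))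
    * measure lebesgue (Kset Z nrm)"
proof -
  let ?n = "CARD('n)"
  define N where "N u = enn2real (surf Z nrm u)" for u
  note N_bounds = surf_homogeneous_bounds[OF Z \<open>0 < c0\<close> bnd]
  have N_ge: "c0 * norm u \<le> N u" and N_le: "N u \<le> C0 * D * norm u" for u
    using N_bounds by (simp_all add: N_def)
  have N_scale: "N (c *\<^sub>R u) = \<bar>c\<bar> * N u" and N_add: "N (u + w) \<le> N u + N w" for c u w
    unfolding N_def using enn2real_surf_scaleR[OF Z] enn2real_surf_add_le[OF Z] N_bounds(1) by auto
  obtain a where a_v: "\<And>i. i < d \<Longrightarrow> a i = v i"
    and a_unit: "\<And>i. d \<le> i \<Longrightarrow> i < ?n \<Longrightarrow> norm (a i) = 1" and "wedge ?n a = wedge d v"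
    using gram_det_orthonormal_extension[of d v] d by (auto simp: wedge_def)
  define M where "M i = (if i < d then \<alpha> * N (v i) else \<beta> * D)" for i
  have M_bounds: "0 < M i \<and> norm (a i) \<le> M i \<and> N (a i) \<le> M i" if "i < ?n" for i
  proof (cases "i < d")
    case True
    then have "norm (a i) = 1" "c0 \<le> N (a i)"
      using a_v v N_ge[of "a i"] by auto
    moreover have "1 \<le> \<alpha> * N (a i)"
      using mult_mono[OF \<open>1 / c0 \<le> \<alpha>\<close> \<open>c0 \<le> N (a i)\<close>] \<open>0 < c0\<close> \<open>1 \<le> \<alpha>\<close> by simp
    ultimately show ?thesis
      using True a_v \<open>1 \<le> \<alpha>\<close> \<open>0 < c0\<close> by (simp add: M_def mult_le_cancel_right1)
  next
    case False
    then have "norm (a i) = 1"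
      using a_unit that by simp
    then have "c0 \<le> C0 * D" and "N (a i) \<le> C0 * D"
      using N_ge[of "a i"] N_le[of "a i"] by auto
    then have "1 \<le> C0 / c0 * D"
      using \<open>0 < c0\<close> by (simp add: field_simps)
    also have "\<dots> \<le> \<beta> * D"
      using \<open>C0 / c0 \<le> \<beta>\<close> \<open>0 < D\<close> by (rule mult_right_mono[OF _ less_imp_le])
    finally show ?thesis
      using False \<open>norm (a i) = 1\<close> \<open>N (a i) \<le> C0 * D\<close> \<open>C0 \<le> \<beta>\<close> \<open>0 < D\<close>
      by (auto simp: M_def intro: order_trans[OF _ mult_right_mono])
  qed
  have "Kset Z nrm = {u \<in> cball 0 1. N u \<le> 1}"
    unfolding N_def using Kset_eq_sublevel[OF Z N_bounds(1)] .
  then show ?thesis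
    using measure_seminorm_ball_ge[of N M a, OF N_scale N_add M_bounds] \<open>wedge ?n a = wedge d v\<close>
    by (simp add: M_def prod_lessThan_if_split[OF d] prod.distrib N_def)
qed

lemma volume_powr_bound:
  fixes n :: nat and W m X :: real
  assumes "0 < n" "0 \<le> W" "0 \<le> m" "0 \<le> X" and vol: "2 ^ n * W \<le> real n ^ n * X * m"
  shows "W powr (1 / n) * m powr (- 1 / n) \<le> real n / 2 * X powr (1 / n)"
proof (cases "W = 0")
  case False
  have "m \<noteq> 0"
  proof
    assume "m = 0"
    then have "2 ^ n * W \<le> 0" using vol by simp
    moreover have "0 < 2 ^ n * W" using False \<open>0 \<le> W\<close> by simp
    ultimately show False by simp
  qed
  then have "0 < m" using \<open>0 \<le> m\<close> by simp
  have "W / m \<le> (real n / 2) ^ n * X"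
    using vol \<open>0 < m\<close> by (simp add: pos_divide_le_eq power_divide le_divide_eq mult_ac)
  then have "root n (W / m) \<le> root n ((real n / 2) ^ n * X)"
    using \<open>0 < n\<close> by simp
  also have "\<dots> = real n / 2 * root n X"
    using \<open>0 < n\<close> by (simp add: real_root_mult real_root_power_cancel)
  finally have "root n (W / m) \<le> real n / 2 * root n X" .
  moreover have "W powr (1 / n) * m powr (- 1 / n) = (W / m) powr (1 / n)"
    by (simp add: powr_divide powr_minus_divide)
  ultimately show ?thesis
    using assms \<open>0 < m\<close> by (simp add: root_powr_inverse)
qed simp

lemma root_weighted_prod_le:
  fixes \<alpha> \<beta> D P :: real and d n :: nat
  assumes "0 < n" "d \<le> n" "1 \<le> \<alpha>" "1 \<le> \<beta>" "0 < D" "0 \<le> P"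
  shows "(\<alpha> ^ d * P * (\<beta> * D) ^ (n - d)) powr (1 / n)
    \<le> \<alpha> * \<beta> * D powr ((real n - real d) / n) * P powr (1 / n)"
proof -
  have "\<alpha> ^ d * \<beta> ^ (n - d) \<le> \<alpha> ^ n * \<beta> ^ n"
    using assms by (intro mult_mono power_increasing) auto
  then have "\<alpha> ^ d * \<beta> ^ (n - d) * (D ^ (n - d) * P) \<le> \<alpha> ^ n * \<beta> ^ n * (D ^ (n - d) * P)"
    using assms by (intro mult_right_mono) auto
  then have "\<alpha> ^ d * P * (\<beta> * D) ^ (n - d) \<le> (\<alpha> * \<beta>) ^ n * (D ^ (n - d) * P)"
    by (simp add: power_mult_distrib mult_ac)
  then have "root n (\<alpha> ^ d * P * (\<beta> * D) ^ (n - d)) \<le> root n ((\<alpha> * \<beta>) ^ n * (D ^ (n - d) * P))"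
    using assms by simp
  also have "\<dots> = \<alpha> * \<beta> * root n (D ^ (n - d)) * root n P"
    using assms by (simp add: real_root_mult real_root_power_cancel)
  also have "root n (D ^ (n - d)) = D powr ((real n - real d) / n)"
    using assms by (simp add: root_powr_inverse powr_realpow[symmetric] powr_powr of_nat_diff)
  finally show ?thesis
    using assms by (simp add: root_powr_inverse)
qed

theorem lemma3p2:
  fixes c0 C0 :: real
  assumes "c0 > 0" and "C0 > 0"
  shows "\<exists>C::real. \<forall>(Z :: (real^'n) set) nrm (D::real) (d::nat) (v :: nat \<Rightarrow> real^'n).
     hypersurface Z nrm \<and> D > 0 \<and>
     (\<forall>e. norm e = 1 \<longrightarrow> ennreal c0 \<le> surf Z nrm e \<and> surf Z nrm e \<le> ennreal (C0 * D)) \<and>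
     1 \<le> d \<and> d \<le> CARD('n) \<and> (\<forall>i<d. norm (v i) = 1)
     \<longrightarrow> wedge d v powr (1 / real CARD('n)) * vis Z nrm
         \<le> C * D powr ((real CARD('n) - real d) / real CARD('n))
             * (\<Prod>i<d. enn2real (surf Z nrm (v i))) powr (1 / real CARD('n))"
proof -
  let ?n = "CARD('n)"
  define \<alpha> where "\<alpha> = max 1 (1 / c0)"
  define \<beta> where "\<beta> = max 1 (max C0 (C0 / c0))"
  show ?thesis
  proof (intro exI[of _ "real ?n / 2 * \<alpha> * \<beta>"] allI impI, elim conjE)
    fix Z :: "(real^'n) set" and nrm D d and v :: "nat \<Rightarrow> real^'n"
    assume Z: "hypersurface Z nrm" and "0 < D" and d: "d \<le> ?n" and v: "\<forall>i<d. norm (v i) = 1"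
      and bnd: "\<forall>e. norm e = 1 \<longrightarrow> ennreal c0 \<le> surf Z nrm e \<and> surf Z nrm e \<le> ennreal (C0 * D)"
    let ?P = "\<Prod>i<d. enn2real (surf Z nrm (v i))"
    let ?X = "\<alpha> ^ d * ?P * (\<beta> * D) ^ (?n - d)"
    have "2 ^ ?n * wedge d v \<le> real ?n ^ ?n * ?X * measure lebesgue (Kset Z nrm)"
      using v bnd \<open>0 < c0\<close>
      by (intro measure_Kset_ge[OF Z \<open>0 < c0\<close> \<open>0 < D\<close> d, of v C0]) (auto simp: \<alpha>_def \<beta>_def)
    then have "wedge d v powr (1 / ?n) * vis Z nrm \<le> real ?n / 2 * ?X powr (1 / ?n)"
      unfolding vis_def using \<open>0 < D\<close> wedge_nonneg[OF d]
      by (intro volume_powr_bound) (auto simp: \<alpha>_def \<beta>_def prod_nonneg)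
    also have "\<dots> \<le> real ?n / 2 * (\<alpha> * \<beta> * D powr ((real ?n - real d) / ?n) * ?P powr (1 / ?n))"
      using d \<open>0 < D\<close>
      by (intro mult_left_mono root_weighted_prod_le) (auto simp: \<alpha>_def \<beta>_def prod_nonneg)
    finally show "wedge d v powr (1 / ?n) * vis Z nrm
        \<le> real ?n / 2 * \<alpha> * \<beta> * D powr ((real ?n - real d) / ?n) * ?P powr (1 / ?n)"
      by (simp add: mult_ac)
  qed
qed

end
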